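(* Let $R(\bar x,\bar y)$ be a definable relation, with $\bar x=(x_1,\dots,x_k)$ and $\bar y=(y_1,\dots,y_l)$. Then there is a natural number $K$ such that for every $\bar a\in\mathcal M^k$, $$\lnot(\exists_{>K}\bar y)R(\bar a,\bar y)\ \lor\ \lnot(\exists_{>K}\bar y)\lnot R(\bar a,\bar y).$$
   Context: $\mathcal M$ denotes the $\mathbb Q$-vector space $\mathbb Q^{<\omega}$ of all sequences $(v_0,v_1,\dots)$ of rationals with only finitely many nonzero terms, with zero vector $\vec 0$, regarded as the structure $\langle\mathcal M;+\rangle$. A relation on $\mathcal M$ is definable if it is first-order definable without parameters in $\langle\mathcal M;+\rangle$. The quantifier $(\exists_{>K}y)Q(y)$ means "there are at least $K+1$ pairwise distinct $y$ with $Q(y)$"; for tuples it is defined inductively by $(\exists_{>K}y_1,\dots,y_l)Q(\bar y):=(\exists_{>K}y_1)(\exists_{>K}y_2,\dots,y_l)Q(\bar y)$. *)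

theory Defs
  imports Main "HOL.Rat"
begin

text \<open>The carrier M = Q^{<omega}: finitely supported rational sequences.\<close>
definition Mset :: "(nat \<Rightarrow> rat) set" where
  "Mset = {v. finite {i. v i \<noteq> 0}}"

definition zerovec :: "nat \<Rightarrow> rat" where
  "zerovec = (\<lambda>i. 0)"

datatype tm = Var nat | Plus tm tm

datatype fm = Eq tm tm | Neg fm | Conj fm fm | Ex nat fm

fun evalt :: "(nat \<Rightarrow> (nat \<Rightarrow> rat)) \<Rightarrow> tm \<Rightarrow> (nat \<Rightarrow> rat)" where
  "evalt e (Var n) = e n"
| "evalt e (Plus s t) = (\<lambda>i. evalt e s i + evalt e t i)"

fun sat :: "(nat \<Rightarrow> (nat \<Rightarrow> rat)) \<Rightarrow> fm \<Rightarrow> bool" where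
  "sat e (Eq s t) = (evalt e s = evalt e t)"
| "sat e (Neg f) = (\<not> sat e f)"
| "sat e (Conj f g) = (sat e f \<and> sat e g)"
| "sat e (Ex n f) = (\<exists>v\<in>Mset. sat (e(n := v)) f)"

definition env :: "nat \<Rightarrow> (nat \<Rightarrow> rat) list \<Rightarrow> (nat \<Rightarrow> rat) list \<Rightarrow> nat \<Rightarrow> (nat \<Rightarrow> rat)" where
  "env k as bs = (\<lambda>i. if i < k then as ! i
                      else if i - k < length bs then bs ! (i - k) else zerovec)"

definition definable :: "nat \<Rightarrow> nat \<Rightarrow> ((nat \<Rightarrow> rat) list \<Rightarrow> (nat \<Rightarrow> rat) list \<Rightarrow> bool) \<Rightarrow> bool" where
  "definable k l R = (\<exists>\<phi>. \<forall>as bs. set as \<subseteq> Mset \<longrightarrow> length as = k \<longrightarrow>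
        set bs \<subseteq> Mset \<longrightarrow> length bs = l \<longrightarrow> (R as bs \<longleftrightarrow> sat (env k as bs) \<phi>))"

text \<open>The counting quantifier (exists_{>K} y_1..y_l) Q(y), defined inductively on l.\<close>
fun exgt :: "nat \<Rightarrow> nat \<Rightarrow> ((nat \<Rightarrow> rat) list \<Rightarrow> bool) \<Rightarrow> bool" where
  "exgt K 0 Q = Q []"
| "exgt K (Suc l) Q = (\<exists>S. S \<subseteq> Mset \<and> finite S \<and> card S = K + 1 \<and>
                          (\<forall>y\<in>S. exgt K l (\<lambda>ys. Q (y # ys))))"

end

theory Submission
  imports Defs
begin

text \<open>The structure (M;+) eliminates quantifiers down to Boolean combinations of linear
equations with integer coefficients. An equation whose coefficient at y is nonzero holds
for exactly one value of y once the other variables are fixed. Hence, if a quantifier-free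
formula has n atoms, among any n+1 values of y one makes every y-dependent atom false, and
there the formula has the truth value of its "generic" version, in which those atoms are
replaced by False. Iterating over y_1,...,y_l: more than n tuples satisfying R force the
generic version of its quantifier-free equivalent at the parameters, more than n tuples
satisfying the negation force the negation of it; so K = n works.\<close>

type_synonym linform = "(int \<times> nat) list"

fun lin_val :: "linform \<Rightarrow> (nat \<Rightarrow> nat \<Rightarrow> rat) \<Rightarrow> nat \<Rightarrow> rat" where
  "lin_val [] e i = 0"
| "lin_val ((c, v) # L) e i = of_int c * e v i + lin_val L e i"

fun lin_coeff :: "nat \<Rightarrow> linform \<Rightarrow> int" where
  "lin_coeff x [] = 0"
| "lin_coeff x ((c, v) # L) = (if v = x then c else 0) + lin_coeff x L"

definition lin_drop :: "nat \<Rightarrow> linform \<Rightarrow> linform" where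
  "lin_drop x L = filter (\<lambda>p. snd p \<noteq> x) L"

definition lin_scale :: "int \<Rightarrow> linform \<Rightarrow> linform" where
  "lin_scale a L = map (\<lambda>(c, v). (a * c, v)) L"

lemma lin_val_append [simp]: "lin_val (L1 @ L2) e i = lin_val L1 e i + lin_val L2 e i"
  by (induction L1) auto

lemma lin_val_scale [simp]: "lin_val (lin_scale a L) e i = of_int a * lin_val L e i"
  by (induction L) (auto simp: lin_scale_def algebra_simps)

lemma lin_val_split: "lin_val L e i = of_int (lin_coeff x L) * e x i + lin_val (lin_drop x L) e i"
  by (induction L) (auto simp: lin_drop_def algebra_simps)

lemma lin_val_drop_upd [simp]: "lin_val (lin_drop x L) (e(x := v)) i = lin_val (lin_drop x L) e i"
  by (induction L) (auto simp: lin_drop_def)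

lemma lin_val_upd_coeff_0:
  "lin_coeff x L = 0 \<Longrightarrow> lin_val L (e(x := v)) i = lin_val L e i"
  using lin_val_split[of L "e(x := v)" i x] lin_val_split[of L e i x] by simp

lemma finite_support_lin_val:
  assumes "range e \<subseteq> Mset"
  shows "finite {i. lin_val L e i \<noteq> 0}"
proof (induction L)
  case (Cons p L)
  obtain c v where p: "p = (c, v)" by force
  have "{i. lin_val (p # L) e i \<noteq> 0} \<subseteq> {i. e v i \<noteq> 0} \<union> {i. lin_val L e i \<noteq> 0}"
    by (auto simp: p)
  moreover have "finite {i. e v i \<noteq> 0}" using assms by (auto simp: Mset_def)
  ultimately show ?case using Cons by (meson finite_Un finite_subset)
qed simp

lemma Mset_infinite: "infinite Mset"
proof -
  let ?unit = "\<lambda>n::nat. (\<lambda>i. if i = n then (1::rat) else 0)"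
  have "inj ?unit" by (rule injI) (metis zero_neq_one)
  moreover have "range ?unit \<subseteq> Mset" by (auto simp: Mset_def)
  ultimately show ?thesis by (meson finite_imageD finite_subset infinite_UNIV_nat)
qed

lemma ex_Mset_notin: "finite A \<Longrightarrow> \<exists>v\<in>Mset. v \<notin> A"
  using Mset_infinite by (meson finite_subset subsetI)

datatype qf = Atom linform | FalseQ | NotQ qf | AndQ qf qf

fun qsat :: "(nat \<Rightarrow> nat \<Rightarrow> rat) \<Rightarrow> qf \<Rightarrow> bool" where
  "qsat e (Atom L) = (\<forall>i. lin_val L e i = 0)"
| "qsat e FalseQ = False"
| "qsat e (NotQ f) = (\<not> qsat e f)"
| "qsat e (AndQ f g) = (qsat e f \<and> qsat e g)"

definition OrQ :: "qf \<Rightarrow> qf \<Rightarrow> qf" where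
  "OrQ f g = NotQ (AndQ (NotQ f) (NotQ g))"

lemma qsat_OrQ [simp]: "qsat e (OrQ f g) = (qsat e f \<or> qsat e g)"
  by (simp add: OrQ_def)

fun atoms :: "qf \<Rightarrow> linform list" where
  "atoms (Atom L) = [L]"
| "atoms FalseQ = []"
| "atoms (NotQ f) = atoms f"
| "atoms (AndQ f g) = atoms f @ atoms g"

definition lin_root :: "(nat \<Rightarrow> nat \<Rightarrow> rat) \<Rightarrow> nat \<Rightarrow> linform \<Rightarrow> nat \<Rightarrow> rat" where
  "lin_root e x L = (\<lambda>i. - lin_val (lin_drop x L) e i / of_int (lin_coeff x L))"

lemma lin_root_in_Mset:
  assumes "range e \<subseteq> Mset"
  shows "lin_root e x L \<in> Mset"
proof -
  have "{i. lin_root e x L i \<noteq> 0} \<subseteq> {i. lin_val (lin_drop x L) e i \<noteq> 0}"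
    by (auto simp: lin_root_def)
  then show ?thesis
    using finite_support_lin_val[OF assms] by (auto simp: Mset_def intro: finite_subset)
qed

lemma lin_val_upd_eq_0_iff:
  assumes "lin_coeff x L \<noteq> 0"
  shows "lin_val L (e(x := v)) i = 0 \<longleftrightarrow> v i = lin_root e x L i"
  using lin_val_split[of L "e(x := v)" i x] assms by (auto simp: lin_root_def field_simps)

fun generic :: "nat \<Rightarrow> qf \<Rightarrow> qf" where
  "generic x (Atom L) = (if lin_coeff x L \<noteq> 0 then FalseQ else Atom L)"
| "generic x FalseQ = FalseQ"
| "generic x (NotQ f) = NotQ (generic x f)"
| "generic x (AndQ f g) = AndQ (generic x f) (generic x g)"

lemma length_atoms_generic: "length (atoms (generic x f)) \<le> length (atoms f)"
  by (induction f) auto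

lemma qsat_generic:
  assumes "\<forall>L\<in>set (atoms f). lin_coeff x L \<noteq> 0 \<longrightarrow> v \<noteq> lin_root e x L"
  shows "qsat (e(x := v)) f = qsat e (generic x f)"
  using assms
proof (induction f)
  case (Atom L)
  show ?case
  proof (cases "lin_coeff x L = 0")
    case True
    then show ?thesis by (simp only: qsat.simps generic.simps lin_val_upd_coeff_0) simp
  next
    case False
    with Atom have "v \<noteq> lin_root e x L" by simp
    then have "\<not> (\<forall>i. lin_val L (e(x := v)) i = 0)"
      using lin_val_upd_eq_0_iff[OF False] by blast
    with False show ?thesis by (simp only: qsat.simps generic.simps if_True not_False_eq_True)
  qed
qed auto

text \<open>Substituting the root of \<open>Lx\<close> for \<open>x\<close>, after clearing the denominator \<open>lin_coeff x Lx\<close>.\<close>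

fun subst_root :: "nat \<Rightarrow> linform \<Rightarrow> qf \<Rightarrow> qf" where
  "subst_root x Lx (Atom L) =
     Atom (lin_scale (lin_coeff x Lx) (lin_drop x L) @ lin_scale (- lin_coeff x L) (lin_drop x Lx))"
| "subst_root x Lx FalseQ = FalseQ"
| "subst_root x Lx (NotQ f) = NotQ (subst_root x Lx f)"
| "subst_root x Lx (AndQ f g) = AndQ (subst_root x Lx f) (subst_root x Lx g)"

lemma qsat_subst_root:
  assumes "lin_coeff x Lx \<noteq> 0"
  shows "qsat e (subst_root x Lx f) = qsat (e(x := lin_root e x Lx)) f"
proof (induction f)
  case (Atom L)
  have val: "lin_val L (e(x := lin_root e x Lx)) i
        = lin_val (lin_scale (lin_coeff x Lx) (lin_drop x L) @ lin_scale (- lin_coeff x L) (lin_drop x Lx)) e i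
          / of_int (lin_coeff x Lx)" for i
    by (subst lin_val_split[of _ _ _ x]) (simp add: assms lin_root_def field_simps)
  show ?case by (simp only: qsat.simps subst_root.simps val) (simp add: assms)
qed auto

text \<open>A witness for \<open>\<exists>x\<close> either is a root of one of the atoms or may be replaced by any
value avoiding all of those roots; the infinitude of \<open>Mset\<close> provides such a value.\<close>

definition qe_exists :: "nat \<Rightarrow> qf \<Rightarrow> qf" where
  "qe_exists x q = foldr (\<lambda>L f. OrQ (subst_root x L q) f)
                     (filter (\<lambda>L. lin_coeff x L \<noteq> 0) (atoms q)) (generic x q)"

lemma qsat_qe_exists_iff:
  "qsat e (qe_exists x q) \<longleftrightarrow>
     qsat e (generic x q) \<or> (\<exists>L\<in>set (atoms q). lin_coeff x L \<noteq> 0 \<and> qsat e (subst_root x L q))"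
proof -
  have "qsat e (foldr (\<lambda>L f. OrQ (subst_root x L q) f) Ls g)
        \<longleftrightarrow> qsat e g \<or> (\<exists>L\<in>set Ls. qsat e (subst_root x L q))" for Ls g
    by (induction Ls) auto
  then show ?thesis by (auto simp: qe_exists_def)
qed

lemma qsat_qe_exists:
  assumes e: "range e \<subseteq> Mset"
  shows "qsat e (qe_exists x q) \<longleftrightarrow> (\<exists>v\<in>Mset. qsat (e(x := v)) q)"
proof
  assume "qsat e (qe_exists x q)"
  then consider "qsat e (generic x q)"
    | L where "lin_coeff x L \<noteq> 0" "qsat e (subst_root x L q)"
    unfolding qsat_qe_exists_iff by blast
  then show "\<exists>v\<in>Mset. qsat (e(x := v)) q"
  proof cases
    case 1
    obtain v where v: "v \<in> Mset" "v \<notin> lin_root e x ` set (atoms q)"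
      using ex_Mset_notin[of "lin_root e x ` set (atoms q)"] by blast
    then have "\<forall>L\<in>set (atoms q). lin_coeff x L \<noteq> 0 \<longrightarrow> v \<noteq> lin_root e x L"
      by blast
    with 1 v(1) show ?thesis using qsat_generic by blast
  next
    case 2
    then have "qsat (e(x := lin_root e x L)) q" using qsat_subst_root[of x L e q] by blast
    with lin_root_in_Mset[OF e] show ?thesis by blast
  qed
next
  assume "\<exists>v\<in>Mset. qsat (e(x := v)) q"
  then obtain v where v: "qsat (e(x := v)) q" by blast
  show "qsat e (qe_exists x q)"
  proof (cases "\<exists>L\<in>set (atoms q). lin_coeff x L \<noteq> 0 \<and> v = lin_root e x L")
    case True
    then obtain L where L: "L \<in> set (atoms q)" "lin_coeff x L \<noteq> 0" "v = lin_root e x L"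
      by blast
    then have "qsat e (subst_root x L q)" using qsat_subst_root[OF L(2)] v by simp
    with L show ?thesis unfolding qsat_qe_exists_iff by blast
  next
    case False
    then have "qsat e (generic x q)" using qsat_generic[of q x v e] v by blast
    then show ?thesis unfolding qsat_qe_exists_iff by blast
  qed
qed

fun lin_of_tm :: "tm \<Rightarrow> linform" where
  "lin_of_tm (Var n) = [(1, n)]"
| "lin_of_tm (Plus s t) = lin_of_tm s @ lin_of_tm t"

lemma lin_val_lin_of_tm: "lin_val (lin_of_tm t) e i = evalt e t i"
  by (induction t) auto

lemma quantifier_elimination: "\<exists>q. \<forall>e. range e \<subseteq> Mset \<longrightarrow> sat e \<phi> = qsat e q"
proof (induction \<phi>)
  case (Eq s t)
  have "sat e (Eq s t) = qsat e (Atom (lin_of_tm s @ lin_scale (-1) (lin_of_tm t)))" for e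
    by (auto simp: lin_val_lin_of_tm fun_eq_iff)
  then show ?case by blast
next
  case (Neg f)
  then obtain q where "\<forall>e. range e \<subseteq> Mset \<longrightarrow> sat e f = qsat e q" by blast
  then have "\<forall>e. range e \<subseteq> Mset \<longrightarrow> sat e (Neg f) = qsat e (NotQ q)" by simp
  then show ?case by blast
next
  case (Conj f g)
  then obtain q1 q2 where "\<forall>e. range e \<subseteq> Mset \<longrightarrow> sat e f = qsat e q1"
    "\<forall>e. range e \<subseteq> Mset \<longrightarrow> sat e g = qsat e q2" by blast
  then have "\<forall>e. range e \<subseteq> Mset \<longrightarrow> sat e (Conj f g) = qsat e (AndQ q1 q2)" by simp
  then show ?case by blast
next
  case (Ex x f)
  then obtain q where q: "\<forall>e. range e \<subseteq> Mset \<longrightarrow> sat e f = qsat e q" by blast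
  have "sat e (Ex x f) = qsat e (qe_exists x q)" if e: "range e \<subseteq> Mset" for e
  proof -
    have "range (e(x := v)) \<subseteq> Mset" if "v \<in> Mset" for v
      using e that by auto
    then have "sat e (Ex x f) = (\<exists>v\<in>Mset. qsat (e(x := v)) q)"
      using q by auto
    then show ?thesis using qsat_qe_exists[OF e] by simp
  qed
  then show ?case by blast
qed

fun generic_from :: "nat \<Rightarrow> nat \<Rightarrow> qf \<Rightarrow> qf" where
  "generic_from k 0 q = q"
| "generic_from k (Suc l) q = generic k (generic_from (Suc k) l q)"

lemma length_atoms_generic_from: "length (atoms (generic_from k l q)) \<le> length (atoms q)"
  by (induction l arbitrary: k) (auto intro: le_trans[OF length_atoms_generic])

lemma generic_from_NotQ: "generic_from k l (NotQ q) = NotQ (generic_from k l q)"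
  by (induction l arbitrary: k) auto

lemma env_Cons: "length as = k \<Longrightarrow> env k as (y # ys) = env (Suc k) (as @ [y]) ys"
  by (auto simp: env_def fun_eq_iff nth_append)

lemma env_Nil_upd: "length as = k \<Longrightarrow> (env k as [])(k := y) = env (Suc k) (as @ [y]) []"
  by (auto simp: env_def fun_eq_iff nth_append)

lemma env_in_Mset:
  "length as = k \<Longrightarrow> set as \<subseteq> Mset \<Longrightarrow> set bs \<subseteq> Mset \<Longrightarrow> range (env k as bs) \<subseteq> Mset"
  by (auto simp: env_def zerovec_def Mset_def subset_iff)

lemma exgt_cong:
  assumes "\<And>bs. set bs \<subseteq> Mset \<Longrightarrow> length bs = l \<Longrightarrow> Q bs = Q' bs"
  shows "exgt K l Q = exgt K l Q'"
  using assms
proof (induction l arbitrary: Q Q')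
  case (Suc l)
  have "exgt K l (\<lambda>ys. Q (y # ys)) = exgt K l (\<lambda>ys. Q' (y # ys))" if "y \<in> Mset" for y
    using Suc.prems that by (intro Suc.IH) auto
  then show ?case by simp (meson subsetD)
qed simp

text \<open>Among \<open>K + 1\<close> values of the first variable at most \<open>K\<close> are roots of an atom of the
already generic formula, so one of them is generic for it.\<close>

lemma exgt_imp_qsat_generic_from:
  assumes "length as = k" and "set as \<subseteq> Mset" and "length (atoms q) \<le> K"
    and "exgt K l (\<lambda>bs. qsat (env k as bs) q)"
  shows "qsat (env k as []) (generic_from k l q)"
  using assms
proof (induction l arbitrary: k as)
  case (Suc l)
  from Suc.prems(4) obtain S where S: "S \<subseteq> Mset" "card S = K + 1"
    "\<forall>y\<in>S. exgt K l (\<lambda>ys. qsat (env k as (y # ys)) q)" by auto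
  let ?e = "env k as []"
  let ?q = "generic_from (Suc k) l q"
  have sat_y: "qsat (?e(k := y)) ?q" if "y \<in> S" for y
  proof -
    have "exgt K l (\<lambda>ys. qsat (env (Suc k) (as @ [y]) ys) q)"
      using S(3) that env_Cons[OF Suc.prems(1)] by simp
    then have "qsat (env (Suc k) (as @ [y]) []) ?q"
      using Suc.IH[of "as @ [y]" "Suc k"] Suc.prems that S(1) by auto
    then show ?thesis using env_Nil_upd[OF Suc.prems(1)] by simp
  qed
  let ?roots = "lin_root ?e k ` set (atoms ?q)"
  have "card ?roots \<le> K"
    using card_image_le[of "set (atoms ?q)" "lin_root ?e k"] card_length[of "atoms ?q"]
      length_atoms_generic_from[of "Suc k" l q] Suc.prems(3) by simp
  then have "\<not> S \<subseteq> ?roots" using S(2) card_mono[of ?roots S] by fastforce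
  then obtain y where "y \<in> S" "y \<notin> ?roots" by blast
  then have "qsat ?e (generic k ?q)" using qsat_generic[of ?q k y ?e] sat_y by auto
  then show ?case by simp
qed simp

theorem mainTheorem1:
  fixes k l :: nat and R :: "(nat \<Rightarrow> rat) list \<Rightarrow> (nat \<Rightarrow> rat) list \<Rightarrow> bool"
  assumes "definable k l R"
  shows "\<exists>K::nat. \<forall>as. set as \<subseteq> Mset \<longrightarrow> length as = k \<longrightarrow>
           (\<not> exgt K l (\<lambda>bs. R as bs) \<or> \<not> exgt K l (\<lambda>bs. \<not> R as bs))"
proof -
  obtain \<phi> where \<phi>: "\<forall>as bs. set as \<subseteq> Mset \<longrightarrow> length as = k \<longrightarrow>
        set bs \<subseteq> Mset \<longrightarrow> length bs = l \<longrightarrow> (R as bs \<longleftrightarrow> sat (env k as bs) \<phi>)"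
    using assms by (auto simp: definable_def)
  obtain q where q: "\<forall>e. range e \<subseteq> Mset \<longrightarrow> sat e \<phi> = qsat e q"
    using quantifier_elimination by blast
  let ?K = "length (atoms q)"
  have "\<not> exgt ?K l (\<lambda>bs. R as bs) \<or> \<not> exgt ?K l (\<lambda>bs. \<not> R as bs)"
    if as: "set as \<subseteq> Mset" "length as = k" for as
  proof -
    have R_iff: "R as bs = qsat (env k as bs) q" if "set bs \<subseteq> Mset" "length bs = l" for bs
      using \<phi> q env_in_Mset[OF as(2,1) that(1)] as that by blast
    have "exgt ?K l (\<lambda>bs. R as bs) = exgt ?K l (\<lambda>bs. qsat (env k as bs) q)"
      by (rule exgt_cong) (simp add: R_iff)
    then have "exgt ?K l (\<lambda>bs. R as bs) \<Longrightarrow> qsat (env k as []) (generic_from k l q)"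
      using exgt_imp_qsat_generic_from[OF as(2,1) le_refl] by simp
    moreover have "exgt ?K l (\<lambda>bs. \<not> R as bs) = exgt ?K l (\<lambda>bs. qsat (env k as bs) (NotQ q))"
      by (rule exgt_cong) (simp add: R_iff)
    then have "exgt ?K l (\<lambda>bs. \<not> R as bs) \<Longrightarrow> qsat (env k as []) (generic_from k l (NotQ q))"
      using exgt_imp_qsat_generic_from[OF as(2,1) le_refl] by simp
    ultimately show ?thesis by (auto simp: generic_from_NotQ)
  qed
  then show ?thesis by blast
qed

end
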